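(* Let $n\geq 1$. Each of the following four statements is equivalent to the inequality $d_n^2 < 2p_{n+1}$ (equivalently, $d_n < \sqrt{2}\,(p_{n+1})^{1/2}$): 1. $p_n > d_n\left(\frac{d_n}{2} - 1\right)$; 2. $\displaystyle \sum_{i=1}^{d_n} i \;-\; \sum_{i=1}^{n} d_i \;<\; \frac{d_n}{2} + 2$; 3. $\displaystyle (p_{n+1})^{1/2} < \left(p_n + \tfrac12\right)^{1/2} + \tfrac{\sqrt2}{2}$; 4. $\displaystyle \left(1 + \frac{1}{2p_n}\right)p_{n+1} < \left(\sqrt{p_n} + \frac{\sqrt2}{2}\sqrt{\frac{p_{n+1}}{p_n}}\right)^2$.
   Context: $p_n$ denotes the $n$th prime ($p_1=2$), and $d_n := p_{n+1}-p_n$ is the $n$th prime gap (so $d_1=1$, $d_2=2$). *)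

theory Defs
  imports "HOL-Analysis.Analysis" "HOL-Library.Infinite_Set"
begin

text \<open>The n-th prime, 1-indexed: pr 1 = 2, pr 2 = 3, ...\<close>
definition pr :: "nat \<Rightarrow> nat" where
  "pr n = enumerate {p::nat. prime p} (n - 1)"

definition gap :: "nat \<Rightarrow> nat" where
  "gap n = pr (Suc n) - pr n"

end

theory Submission
  imports Defs
begin

text \<open>With \<open>q = p + d\<close>, each of the four inequalities becomes, after squaring away the
  square roots, either \<open>d\<^sup>2 < 2 q\<close> or \<open>d < sqrt (2 q)\<close>. For instance
  \<open>(sqrt (p + 1/2) + sqrt 2 / 2)\<^sup>2 = p + 1 + sqrt (2 p + 1)\<close>, so statement 3 reads
  \<open>d - 1 < sqrt (2 p + 1)\<close>, i.e. \<open>(d - 1)\<^sup>2 < 2 p + 1\<close>. The sum of the first \<open>n\<close> gaps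
  telescopes to \<open>p\<^sub>n\<^sub>+\<^sub>1 - 2\<close>, and the triangular number of \<open>d\<close> is \<open>d (d + 1) / 2\<close>.\<close>

lemma prime_pr: "prime (pr n)"
  unfolding pr_def using enumerate_in_set[OF primes_infinite] by simp

lemma pr_le_Suc: "pr n \<le> pr (Suc n)"
  unfolding pr_def using primes_infinite by simp

lemma pr_less_Suc: "n \<ge> 1 \<Longrightarrow> pr n < pr (Suc n)"
  unfolding pr_def using enumerate_mono[OF _ primes_infinite, of "n - 1" n] by simp

lemma pr_1: "pr 1 = 2"
proof -
  have "pr 1 = (LEAST p::nat. prime p)"
    unfolding pr_def by (simp add: enumerate_0)
  also have "\<dots> = 2"
    by (rule Least_equality) (auto dest: prime_ge_2_nat)
  finally show ?thesis .
qed

lemma real_gap: "real (gap n) = real (pr (Suc n)) - real (pr n)"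
  unfolding gap_def using pr_le_Suc by (simp add: of_nat_diff)

lemma sum_gap: "(\<Sum>i = 1..n. real (gap i)) = real (pr (Suc n)) - 2"
  using sum_Suc_diff[of 1 n "\<lambda>i. real (pr i)"] pr_1 by (simp add: real_gap)

lemma less_sqrt_iff: "0 \<le> x \<Longrightarrow> x < sqrt y \<longleftrightarrow> x\<^sup>2 < y"
  by (metis real_sqrt_abs real_sqrt_less_iff abs_of_nonneg)

lemma sqrt_less_iff: "0 \<le> y \<Longrightarrow> sqrt x < y \<longleftrightarrow> x < y\<^sup>2"
  by (metis real_sqrt_abs real_sqrt_less_iff abs_of_nonneg)

lemma gap_criterion_product:
  fixes p q :: real
  shows "p > (q - p) * ((q - p) / 2 - 1) \<longleftrightarrow> (q - p)\<^sup>2 < 2 * q"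
  by (simp add: power2_eq_square algebra_simps)

lemma gap_criterion_triangular:
  fixes q :: real
  shows "(\<Sum>i = 1..d. real i) - (q - 2) < real d / 2 + 2 \<longleftrightarrow> (real d)\<^sup>2 < 2 * q"
  using double_gauss_sum_from_Suc_0[of d, where 'a = real]
  by (simp add: power2_eq_square field_simps)

lemma gap_criterion_sqrt_shift:
  fixes p q :: real
  assumes "0 \<le> p" and "1 \<le> q - p"
  shows "sqrt q < sqrt (p + 1 / 2) + sqrt 2 / 2 \<longleftrightarrow> (q - p)\<^sup>2 < 2 * q"
proof -
  have "sqrt (p + 1 / 2) * sqrt 2 = sqrt (2 * p + 1)"
    by (simp add: real_sqrt_mult[symmetric] algebra_simps)
  then have square: "(sqrt (p + 1 / 2) + sqrt 2 / 2)\<^sup>2 = p + 1 + sqrt (2 * p + 1)"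
    using assms by (simp add: power2_eq_square algebra_simps)
  have "sqrt q < sqrt (p + 1 / 2) + sqrt 2 / 2 \<longleftrightarrow> q < (sqrt (p + 1 / 2) + sqrt 2 / 2)\<^sup>2"
    using assms by (intro sqrt_less_iff) simp
  also have "\<dots> \<longleftrightarrow> q - p - 1 < sqrt (2 * p + 1)"
    unfolding square by linarith
  also have "\<dots> \<longleftrightarrow> (q - p - 1)\<^sup>2 < 2 * p + 1"
    using assms by (simp add: less_sqrt_iff)
  also have "\<dots> \<longleftrightarrow> (q - p)\<^sup>2 < 2 * q"
    by (simp add: power2_eq_square algebra_simps)
  finally show ?thesis .
qed

lemma gap_criterion_ratio:
  fixes p q :: real
  assumes "0 < p" and "p \<le> q"
  shows "(1 + 1 / (2 * p)) * q < (sqrt p + sqrt 2 / 2 * sqrt (q / p))\<^sup>2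
           \<longleftrightarrow> (q - p)\<^sup>2 < 2 * q"
proof -
  have "sqrt p * sqrt (q / p) = sqrt q"
    using assms by (simp add: real_sqrt_mult[symmetric])
  then have "(sqrt p + sqrt 2 / 2 * sqrt (q / p))\<^sup>2 = p + sqrt (2 * q) + q / (2 * p)"
    using assms by (simp add: power2_eq_square algebra_simps real_sqrt_mult)
  moreover have "(1 + 1 / (2 * p)) * q = q + q / (2 * p)"
    by (simp add: algebra_simps)
  ultimately have "(1 + 1 / (2 * p)) * q < (sqrt p + sqrt 2 / 2 * sqrt (q / p))\<^sup>2
                     \<longleftrightarrow> q - p < sqrt (2 * q)"
    by auto
  also have "\<dots> \<longleftrightarrow> (q - p)\<^sup>2 < 2 * q"
    using assms by (simp add: less_sqrt_iff)
  finally show ?thesis .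
qed

theorem theorem1p5:
  fixes n :: nat
  assumes "n \<ge> 1"
  shows "(real (pr n) > real (gap n) * (real (gap n) / 2 - 1)
            \<longleftrightarrow> real (gap n) ^ 2 < 2 * real (pr (Suc n)))
       \<and> ((\<Sum>i = 1..gap n. real i) - (\<Sum>i = 1..n. real (gap i)) < real (gap n) / 2 + 2
            \<longleftrightarrow> real (gap n) ^ 2 < 2 * real (pr (Suc n)))
       \<and> (sqrt (real (pr (Suc n))) < sqrt (real (pr n) + 1 / 2) + sqrt 2 / 2
            \<longleftrightarrow> real (gap n) ^ 2 < 2 * real (pr (Suc n)))
       \<and> ((1 + 1 / (2 * real (pr n))) * real (pr (Suc n))
              < (sqrt (real (pr n)) + sqrt 2 / 2 * sqrt (real (pr (Suc n)) / real (pr n))) ^ 2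
            \<longleftrightarrow> real (gap n) ^ 2 < 2 * real (pr (Suc n)))"
proof -
  have "pr n < pr (Suc n)"
    using pr_less_Suc[OF assms] .
  moreover have "2 \<le> pr n"
    using prime_ge_2_nat[OF prime_pr] .
  ultimately have "0 < real (pr n)" and "1 \<le> real (pr (Suc n)) - real (pr n)"
    by simp_all
  then show ?thesis
    unfolding sum_gap
    using gap_criterion_product gap_criterion_triangular[of "gap n"]
      gap_criterion_sqrt_shift gap_criterion_ratio
    by (simp add: real_gap)
qed

end
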